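(* Let $\alpha>0$ and define $\phi:[0,\infty)\to\mathbb{R}$ by $\phi(t)=e^{-\alpha\left(1+\tan\frac{\pi}{2}t^{2}\right)^{2}}$ for $0\le t<1$ and $\phi(t)=0$ for $t\ge 1$. For each integer $j\ge 1$, let $F_j(\alpha,u)$ be the polynomial in $\alpha,u$ with integer coefficients determined by $$\frac{d^{j}}{dt^{j}}\phi(\sqrt{t})=e^{-\alpha(1+u)^{2}}(-1)^{j}\alpha\left(\frac{\pi}{2}\right)^{j}(1+u^{2})\,F_{j}(\alpha,u),\qquad u=\tan\frac{\pi}{2}t,\quad 0<t<1,$$ valid for all $\alpha>0$. Then for each $j\ge 1$ there exists a number $\alpha_j>0$ such that $F_j(\alpha,u)\ge 0$ for all $\alpha\ge\alpha_j$ and all $u\ge 0$.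
   Context: For example, $F_1(\alpha,u)=2u+2$ and $F_2(\alpha,u)=4\alpha(1+u)^2(1+u^2)-2(1+u^2)-4(1+u)u$. The paper asserts that $F_j(\alpha,u)=a_j\alpha^{j-1}u^{3(j-1)+1}+\sum_{k=0}^{j-2}\sum_{l=0}^{3j-3}a_{kl}\alpha^k u^l$ with $a_j$ a positive integer and $a_{kl}$ integers. *)

theory Defs
  imports "HOL-Analysis.Analysis"
begin

definition phi :: "real \<Rightarrow> real \<Rightarrow> real" where
  "phi \<alpha> t = (if t < 1 then exp (- \<alpha> * (1 + tan (pi / 2 * t\<^sup>2))\<^sup>2) else 0)"

definition int_poly2 :: "(real \<Rightarrow> real \<Rightarrow> real) \<Rightarrow> bool" where
  "int_poly2 P \<longleftrightarrow> (\<exists>N (c :: nat \<Rightarrow> nat \<Rightarrow> int). \<forall>a u.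
      P a u = (\<Sum>k\<le>N. \<Sum>l\<le>N. of_int (c k l) * a ^ k * u ^ l))"

end

theory Submission
  imports Defs "HOL-Computational_Algebra.Polynomial"
begin

text \<open>With \<open>u = tan (pi/2 * t)\<close> one has \<open>d/dt = pi/2 * (1 + u\<^sup>2) * d/du\<close>, so every derivative
  of \<open>t \<mapsto> phi \<alpha> (sqrt t) = exp (- \<alpha> * (1 + u)\<^sup>2)\<close> on \<open>(0,1)\<close> is that exponential times an explicit
  polynomial in \<open>\<alpha>\<close> and \<open>u\<close>, obtained by a recurrence. Expanded in powers of \<open>\<alpha>\<close>, the coefficient
  of the top power \<open>\<alpha>^(j-1)\<close> of \<open>F j\<close> is \<open>(2 + 2u)^j * (1 + u\<^sup>2)^(j-1) \<ge> (1 + u)^(3j-2)\<close>, while the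
  lower coefficients have degree at most \<open>3j - 2\<close> in \<open>u\<close>; hence for large \<open>\<alpha>\<close> the top term wins
  uniformly in \<open>u \<ge> 0\<close>. The hypothesis pins \<open>F\<close> down for \<open>\<alpha>, u > 0\<close>, and continuity covers \<open>u = 0\<close>.\<close>

text \<open>\<open>F_poly m \<alpha>\<close> is the paper's \<open>F (m+1) (\<alpha>, \<cdot>)\<close>, as a polynomial in \<open>u\<close>.\<close>
fun F_poly :: "nat \<Rightarrow> real \<Rightarrow> real poly" where
  "F_poly 0 a = [:2, 2:]"
| "F_poly (Suc m) a = smult a ([:2, 2:] * [:1, 0, 1:] * F_poly m a)
     - [:0, 2:] * F_poly m a - [:1, 0, 1:] * pderiv (F_poly m a)"

fun dphi :: "nat \<Rightarrow> real \<Rightarrow> real \<Rightarrow> real" where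
  "dphi 0 a u = exp (- a * (1 + u)\<^sup>2)"
| "dphi (Suc m) a u = exp (- a * (1 + u)\<^sup>2) * (-1) ^ Suc m * a * (pi / 2) ^ Suc m
     * (1 + u\<^sup>2) * poly (F_poly m a) u"

lemma one_plus_square_pos: "0 < 1 + (u::real)\<^sup>2"
  using zero_le_power2[of u] by linarith

lemma dphi_has_derivative:
  "(dphi j a has_real_derivative dphi (Suc j) a u / (pi / 2 * (1 + u\<^sup>2))) (at u)"
proof -
  have pos: "0 < pi / 2 * (1 + u\<^sup>2)"
    using one_plus_square_pos[of u] by simp
  have nz: "1 + u * u \<noteq> 0"
    using one_plus_square_pos[of u] by (simp add: power2_eq_square)
  show ?thesis
  proof (cases j)
    case 0
    show ?thesis
      unfolding 0 dphi.simps[abs_def]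
      by ((rule derivative_eq_intros refl)+, subst eq_divide_eq, simp add: pos,
          simp add: algebra_simps power2_eq_square nz)
  next
    case (Suc m)
    show ?thesis
      unfolding Suc dphi.simps[abs_def]
      by ((rule derivative_eq_intros refl poly_DERIV)+, subst eq_divide_eq, simp add: pos,
          simp add: algebra_simps power2_eq_square nz)
  qed
qed

lemma tan_half_pi_has_derivative:
  assumes "t \<in> {0<..<1::real}"
  shows "((\<lambda>x. tan (pi / 2 * x)) has_real_derivative pi / 2 * (1 + (tan (pi / 2 * t))\<^sup>2)) (at t)"
proof -
  have "0 < pi / 2 * t" "pi / 2 * t < pi / 2"
    using assms by auto
  then have "cos (pi / 2 * t) > 0"
    using pi_gt_zero by (intro cos_gt_zero_pi) linarith+
  then show ?thesis
    by (auto intro!: derivative_eq_intros simp: tan_sec power_inverse)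
qed

lemma has_real_derivative_comp_tan_half_pi:
  assumes "t \<in> {0<..<1::real}"
    and "(G has_real_derivative D / (pi / 2 * (1 + (tan (pi / 2 * t))\<^sup>2))) (at (tan (pi / 2 * t)))"
  shows "((\<lambda>x. G (tan (pi / 2 * x))) has_real_derivative D) (at t)"
proof -
  have "pi / 2 * (1 + (tan (pi / 2 * t))\<^sup>2) \<noteq> 0"
    using one_plus_square_pos[of "tan (pi / 2 * t)"] by simp
  then show ?thesis
    using DERIV_chain2[OF assms(2) tan_half_pi_has_derivative[OF assms(1)]] by simp
qed

lemma tan_half_pi_surj:
  assumes "0 < u"
  obtains t where "t \<in> {0<..<1::real}" and "tan (pi / 2 * t) = u"
proof
  show "arctan u / (pi / 2) \<in> {0<..<1}"
    using assms arctan_ubound[of u] by (auto simp: field_simps)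
  show "tan (pi / 2 * (arctan u / (pi / 2))) = u"
    by (simp add: tan_arctan)
qed

lemma deriv_funpow_phi_sqrt:
  assumes "t \<in> {0<..<1::real}"
  shows "(deriv ^^ j) (\<lambda>s. phi a (sqrt s)) t = dphi j a (tan (pi / 2 * t))"
  using assms
proof (induction j arbitrary: t)
  case 0
  then show ?case by (simp add: phi_def real_sqrt_lt_1_iff)
next
  case (Suc j)
  have "eventually (\<lambda>s. s \<in> {0<..<1}) (nhds t)"
    using Suc.prems by (intro eventually_nhds_in_open) auto
  then have "eventually (\<lambda>s. (deriv ^^ j) (\<lambda>s. phi a (sqrt s)) s = dphi j a (tan (pi / 2 * s))) (nhds t)"
    by (rule eventually_mono) (rule Suc.IH)
  then have "(deriv ^^ Suc j) (\<lambda>s. phi a (sqrt s)) t = deriv (\<lambda>s. dphi j a (tan (pi / 2 * s))) t"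
    by (simp add: deriv_cong_ev)
  also have "\<dots> = dphi (Suc j) a (tan (pi / 2 * t))"
    by (intro DERIV_imp_deriv has_real_derivative_comp_tan_half_pi Suc.prems dphi_has_derivative)
  finally show ?case .
qed

fun F_coeff :: "nat \<Rightarrow> nat \<Rightarrow> real poly" where
  "F_coeff 0 k = (if k = 0 then [:2, 2:] else 0)"
| "F_coeff (Suc m) k = (if k = 0 then 0 else [:2, 2:] * [:1, 0, 1:] * F_coeff m (k - 1))
     - [:0, 2:] * F_coeff m k - [:1, 0, 1:] * pderiv (F_coeff m k)"

lemma F_coeff_eq_0: "m < k \<Longrightarrow> F_coeff m k = 0"
  by (induction m arbitrary: k) auto

lemma F_coeff_diag: "F_coeff m m = [:2, 2:] ^ Suc m * [:1, 0, 1:] ^ m"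
  by (induction m) (auto simp: F_coeff_eq_0 algebra_simps)

lemma degree_F_coeff_le: "degree (F_coeff m k) \<le> m + 1 + 2 * k"
proof (induction m arbitrary: k)
  case 0
  then show ?case by auto
next
  case (Suc m)
  have "degree (if k = 0 then 0 else [:2, 2:] * [:1, 0, 1:] * F_coeff m (k - 1)) \<le> Suc m + 1 + 2 * k"
  proof (cases "k = 0")
    case False
    have "degree ([:2, 2:] * [:1, 0, 1:] * F_coeff m (k - 1))
        \<le> degree ([:2, 2:] * [:1, 0, 1:] :: real poly) + degree (F_coeff m (k - 1))"
      by (rule degree_mult_le)
    also have "\<dots> \<le> 3 + (m + 1 + 2 * (k - 1))"
      using Suc.IH[of "k - 1"] degree_mult_le[of "[:2, 2:]" "[:1, 0, 1::real:]"] by simp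
    finally show ?thesis
      using False by simp
  qed simp
  moreover have "degree ([:0, 2:] * F_coeff m k) \<le> Suc m + 1 + 2 * k"
    using degree_mult_le[of "[:0, 2:]" "F_coeff m k"] Suc.IH[of k] by simp
  moreover have "degree ([:1, 0, 1:] * pderiv (F_coeff m k)) \<le> Suc m + 1 + 2 * k"
    using degree_mult_le[of "[:1, 0, 1:]" "pderiv (F_coeff m k)"] Suc.IH[of k]
      degree_pderiv[of "F_coeff m k"] by simp
  ultimately show ?case
    unfolding F_coeff.simps by (intro degree_diff_le)
qed

lemma pderiv_sum: "pderiv (\<Sum>k\<in>A. f k) = (\<Sum>k\<in>A. pderiv (f k))"
  by (induction A rule: infinite_finite_induct) (auto simp: pderiv_add)

lemma smult_sum_right: "smult c (\<Sum>k\<in>A. f k) = (\<Sum>k\<in>A. smult c (f k))"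
  by (induction A rule: infinite_finite_induct) (auto simp: smult_add_right)

lemma F_poly_eq_sum_F_coeff: "F_poly m a = (\<Sum>k\<le>m. smult (a ^ k) (F_coeff m k))"
proof (induction m)
  case 0
  then show ?case by simp
next
  case (Suc m)
  let ?A = "[:2, 2:] * [:1, 0, 1:] :: real poly"
  have "(\<Sum>k\<le>Suc m. smult (a ^ k) (if k = 0 then 0 else ?A * F_coeff m (k - 1)))
      = smult a (?A * F_poly m a)"
    unfolding Suc.IH sum.atMost_Suc_shift
    by (simp add: sum_distrib_left smult_sum_right mult_smult_right smult_smult mult.assoc)
  moreover have "(\<Sum>k\<le>Suc m. smult (a ^ k) ([:0, 2:] * F_coeff m k)) = [:0, 2:] * F_poly m a"
    unfolding Suc.IH by (simp add: F_coeff_eq_0 sum_distrib_left)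
  moreover have "(\<Sum>k\<le>Suc m. smult (a ^ k) ([:1, 0, 1:] * pderiv (F_coeff m k)))
      = [:1, 0, 1:] * pderiv (F_poly m a)"
    unfolding Suc.IH by (simp add: F_coeff_eq_0 sum_distrib_left pderiv_sum pderiv_smult)
  ultimately show ?case
    by (simp only: F_poly.simps F_coeff.simps smult_diff_right sum_subtractf)
qed

lemma poly_F_coeff_diag_ge:
  assumes "0 \<le> u"
  shows "(1 + u) ^ (3 * m + 1) \<le> poly (F_coeff m m) u"
proof -
  have "(2 + 2 * u) * (1 + u\<^sup>2) - (1 + u) ^ 3 = (1 - u)\<^sup>2 * (1 + u)"
    by (simp add: algebra_simps power2_eq_square power3_eq_cube)
  moreover have "0 \<le> (1 - u)\<^sup>2 * (1 + u)"
    using assms by simp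
  ultimately have cube: "(1 + u) ^ 3 \<le> (2 + 2 * u) * (1 + u\<^sup>2)"
    by linarith
  have "poly [:2, 2:] u = 2 + 2 * u" "poly [:1, 0, 1:] u = 1 + u\<^sup>2"
    by (simp_all add: power2_eq_square)
  then have diag: "poly (F_coeff m m) u = (2 + 2 * u) * ((2 + 2 * u) * (1 + u\<^sup>2)) ^ m"
    by (simp only: F_coeff_diag poly_mult poly_power power_Suc power_mult_distrib mult.assoc)
  have "(1 + u) ^ (3 * m + 1) = (1 + u) * ((1 + u) ^ 3) ^ m"
    by (simp add: power_mult[symmetric])
  also have "\<dots> \<le> (2 + 2 * u) * ((2 + 2 * u) * (1 + u\<^sup>2)) ^ m"
    using assms cube by (intro mult_mono power_mono) auto
  finally show ?thesis
    unfolding diag .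
qed

lemma abs_poly_le_sum_abs_coeff:
  fixes p :: "real poly"
  assumes "degree p \<le> n" "0 \<le> u"
  shows "\<bar>poly p u\<bar> \<le> (\<Sum>i\<le>degree p. \<bar>coeff p i\<bar>) * (1 + u) ^ n"
proof -
  have "\<bar>poly p u\<bar> \<le> (\<Sum>i\<le>degree p. \<bar>coeff p i * u ^ i\<bar>)"
    unfolding poly_altdef by (rule sum_abs)
  also have "\<dots> \<le> (\<Sum>i\<le>degree p. \<bar>coeff p i\<bar> * (1 + u) ^ n)"
  proof (rule sum_mono)
    fix i assume "i \<in> {..degree p}"
    then have "u ^ i \<le> (1 + u) ^ i" "(1 + u) ^ i \<le> (1 + u) ^ n"
      using assms by (auto intro!: power_mono power_increasing)
    then show "\<bar>coeff p i * u ^ i\<bar> \<le> \<bar>coeff p i\<bar> * (1 + u) ^ n"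
      using assms(2) by (simp add: abs_mult mult_left_mono)
  qed
  finally show ?thesis
    by (simp add: sum_distrib_right)
qed

lemma nonneg_for_large_param_if_top_dominates:
  fixes q :: "nat \<Rightarrow> real poly"
  assumes deg: "\<And>k. k < m \<Longrightarrow> degree (q k) \<le> n"
    and top: "\<And>u. 0 \<le> u \<Longrightarrow> (1 + u) ^ n \<le> poly (q m) u"
  shows "\<exists>A>0. \<forall>a\<ge>A. \<forall>u\<ge>0. 0 \<le> (\<Sum>k\<le>m. a ^ k * poly (q k) u)"
proof -
  define B where "B k = (\<Sum>i\<le>degree (q k). \<bar>coeff (q k) i\<bar>)" for k
  define C where "C = (\<Sum>k<m. B k)"
  show ?thesis
  proof (intro exI[of _ "max 1 C"] conjI allI impI)
    fix a u :: real
    assume "max 1 C \<le> a" and u: "0 \<le> u"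
    then have a: "1 \<le> a" "C \<le> a"
      by auto
    have "- (a ^ m / a * B k * (1 + u) ^ n) \<le> a ^ k * poly (q k) u" if "k < m" for k
    proof -
      have "a ^ k * a \<le> a ^ m"
        using a(1) \<open>k < m\<close> power_increasing[of "Suc k" m a] by (simp add: mult.commute)
      then have "a ^ k \<le> a ^ m / a"
        using a(1) by (simp add: le_divide_eq)
      moreover have "\<bar>poly (q k) u\<bar> \<le> B k * (1 + u) ^ n"
        unfolding B_def using deg[OF \<open>k < m\<close>] u by (rule abs_poly_le_sum_abs_coeff)
      ultimately have "\<bar>a ^ k * poly (q k) u\<bar> \<le> a ^ m / a * (B k * (1 + u) ^ n)"
        unfolding abs_mult using a(1) by (intro mult_mono) auto
      then show ?thesis
        by (simp add: mult.assoc)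
    qed
    then have "- (a ^ m / a * C * (1 + u) ^ n) \<le> (\<Sum>k<m. a ^ k * poly (q k) u)"
      unfolding C_def sum_distrib_left sum_distrib_right sum_negf[symmetric] by (intro sum_mono) auto
    moreover have "a ^ m / a * C * (1 + u) ^ n \<le> a ^ m * (1 + u) ^ n"
      using a u by (intro mult_right_mono) (auto simp: divide_le_eq mult_left_mono)
    moreover have "a ^ m * (1 + u) ^ n \<le> a ^ m * poly (q m) u"
      using a(1) top[OF u] by (intro mult_left_mono) auto
    ultimately show "0 \<le> (\<Sum>k\<le>m. a ^ k * poly (q k) u)"
      by (simp add: lessThan_Suc_atMost[symmetric])
  qed simp
qed

lemma F_poly_nonneg_for_large_param: "\<exists>A>0. \<forall>a\<ge>A. \<forall>u\<ge>0. 0 \<le> poly (F_poly m a) u"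
proof -
  have "\<exists>A>0. \<forall>a\<ge>A. \<forall>u\<ge>0. 0 \<le> (\<Sum>k\<le>m. a ^ k * poly (F_coeff m k) u)"
  proof (rule nonneg_for_large_param_if_top_dominates)
    show "degree (F_coeff m k) \<le> 3 * m + 1" if "k < m" for k
      using degree_F_coeff_le[of m k] that by linarith
  qed (rule poly_F_coeff_diag_ge)
  then show ?thesis
    by (simp add: F_poly_eq_sum_F_coeff poly_sum)
qed

lemma int_poly2_isCont:
  assumes "int_poly2 P"
  shows "isCont (P a) u"
proof -
  obtain N and c :: "nat \<Rightarrow> nat \<Rightarrow> int"
    where "\<forall>a u. P a u = (\<Sum>k\<le>N. \<Sum>l\<le>N. of_int (c k l) * a ^ k * u ^ l)"
    using assms unfolding int_poly2_def by blast
  then have "P a = (\<lambda>u. \<Sum>k\<le>N. \<Sum>l\<le>N. of_int (c k l) * a ^ k * u ^ l)"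
    by blast
  then show ?thesis
    by (simp add: continuous_intros)
qed

lemma nonneg_at_nonneg_if_nonneg_at_pos:
  fixes f :: "real \<Rightarrow> real"
  assumes "isCont f 0" and pos: "\<And>v. 0 < v \<Longrightarrow> 0 \<le> f v" and "0 \<le> u"
  shows "0 \<le> f u"
proof (cases "u = 0")
  case True
  have "(f \<longlongrightarrow> f 0) (at_right 0)"
    using assms(1) by (simp add: isCont_def filterlim_at_split)
  moreover have "eventually (\<lambda>v. 0 \<le> f v) (at_right 0)"
    using pos eventually_at_right_less[of 0] by (auto elim: eventually_mono)
  ultimately have "0 \<le> f 0"
    by (rule tendsto_lowerbound) simp
  then show ?thesis
    using True by simp
qed (use pos \<open>0 \<le> u\<close> in simp)

lemma eq_F_poly_if_deriv_formula:
  assumes "\<forall>t\<in>{0<..<1}.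
           (deriv ^^ Suc m) (\<lambda>s. phi \<alpha> (sqrt s)) t =
             exp (- \<alpha> * (1 + tan (pi / 2 * t))\<^sup>2) * (-1) ^ Suc m * \<alpha> * (pi / 2) ^ Suc m
             * (1 + (tan (pi / 2 * t))\<^sup>2) * G (tan (pi / 2 * t))"
    and "\<alpha> \<noteq> 0" and "0 < u"
  shows "G u = poly (F_poly m \<alpha>) u"
proof -
  obtain t where t: "t \<in> {0<..<1}" and u: "tan (pi / 2 * t) = u"
    using tan_half_pi_surj[OF \<open>0 < u\<close>] by blast
  have "(deriv ^^ Suc m) (\<lambda>s. phi \<alpha> (sqrt s)) t
      = exp (- \<alpha> * (1 + u)\<^sup>2) * (-1) ^ Suc m * \<alpha> * (pi / 2) ^ Suc m * (1 + u\<^sup>2) * G u"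
    using bspec[OF assms(1) t] unfolding u .
  moreover have "(deriv ^^ Suc m) (\<lambda>s. phi \<alpha> (sqrt s)) t
      = exp (- \<alpha> * (1 + u)\<^sup>2) * (-1) ^ Suc m * \<alpha> * (pi / 2) ^ Suc m * (1 + u\<^sup>2) * poly (F_poly m \<alpha>) u"
    using deriv_funpow_phi_sqrt[OF t] unfolding u by (simp only: dphi.simps)
  moreover have "1 + u\<^sup>2 \<noteq> 0"
    using one_plus_square_pos[of u] by linarith
  ultimately show ?thesis
    using \<open>\<alpha> \<noteq> 0\<close> by simp
qed

theorem lemma2p1:
  fixes j :: nat and F :: "real \<Rightarrow> real \<Rightarrow> real"
  assumes "j \<ge> 1"
    and "int_poly2 F"
    and "\<forall>\<alpha>>0. \<forall>t\<in>{0<..<1}.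
           (deriv ^^ j) (\<lambda>s. phi \<alpha> (sqrt s)) t =
             exp (- \<alpha> * (1 + tan (pi / 2 * t))\<^sup>2) * (-1) ^ j * \<alpha> * (pi / 2) ^ j
             * (1 + (tan (pi / 2 * t))\<^sup>2) * F \<alpha> (tan (pi / 2 * t))"
  shows "\<exists>\<alpha>j>0. \<forall>\<alpha>\<ge>\<alpha>j. \<forall>u\<ge>0. F \<alpha> u \<ge> 0"
proof -
  obtain m where j: "j = Suc m"
    using assms(1) by (cases j) auto
  obtain A where "0 < A" and A: "\<forall>a\<ge>A. \<forall>u\<ge>0. 0 \<le> poly (F_poly m a) u"
    using F_poly_nonneg_for_large_param by blast
  show ?thesis
  proof (intro exI[of _ A] conjI allI impI)
    fix \<alpha> u :: real
    assume "A \<le> \<alpha>" and "0 \<le> u"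
    then have "0 < \<alpha>"
      using \<open>0 < A\<close> by simp
    have "F \<alpha> v = poly (F_poly m \<alpha>) v" if "0 < v" for v
      using assms(3) \<open>0 < \<alpha>\<close> that unfolding j by (intro eq_F_poly_if_deriv_formula) auto
    then have "0 \<le> F \<alpha> v" if "0 < v" for v
      using A \<open>A \<le> \<alpha>\<close> that by simp
    then show "0 \<le> F \<alpha> u"
      by (rule nonneg_at_nonneg_if_nonneg_at_pos[OF int_poly2_isCont[OF assms(2)] _ \<open>0 \<le> u\<close>])
  qed (rule \<open>0 < A\<close>)
qed

end
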